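(* There is an absolute constant $c_0<10$ such that for each $b\in(0,\pi)$, each $n\in\mathbb{N}$ and every odd trigonometric polynomial $T_n\in\mathcal{T}_n$, $$\|T_n'\|_{[-b/2,b/2]}\le \frac{c_0}{b}\,n\,\|T_n\|_{[-b,b]}.$$
   Context: $\mathcal{T}_n$ is the space of real trigonometric polynomials $\alpha_0+\sum_{k=1}^n(\alpha_k\cos kt+\beta_k\sin kt)$ of degree $\le n$. For a function $g$ on $[a,b]$, $\|g\|_{[a,b]}:=\max_{x\in[a,b]}|g(x)|$. *)

theory Defs
  imports "HOL-Analysis.Analysis"
begin

definition trig_poly :: "nat \<Rightarrow> (real \<Rightarrow> real) \<Rightarrow> bool" where
  "trig_poly n T \<longleftrightarrow> (\<exists>\<alpha> \<beta> :: nat \<Rightarrow> real.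
     \<forall>t. T t = \<alpha> 0 + (\<Sum>k=1..n. \<alpha> k * cos (real k * t) + \<beta> k * sin (real k * t)))"

definition sup_norm_on :: "(real \<Rightarrow> real) \<Rightarrow> real \<Rightarrow> real \<Rightarrow> real" where
  "sup_norm_on g a b = (SUP x\<in>{a..b}. \<bar>g x\<bar>)"

end

(*
  An odd T of degree n is a sine polynomial, and T(t) cos(t/2) = Q(sin(t/2)) for a real
  polynomial Q of degree at most 2n+1. Since the half-angle sine maps [-b,b] onto [-a,a],
  a = sin(b/2), Q is bounded there by the sup norm M of T on [-b,b]. Bernstein's inequality
  for algebraic polynomials, sqrt(a^2 - y^2) |Q'(y)| <= (2n+1) M, is good at the points
  y = sin(t/2) with |t| <= b/2, because they satisfy 2 y^2 <= a^2. Differentiating the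
  identity gives T'(t) = Q'(sin(t/2))/2 + T(t) tan(t/2)/2, and a >= 0.29 b finishes the
  estimate. The algebraic Bernstein inequality is the trigonometric one for the cosine
  polynomial Q(a cos s), and the trigonometric one follows from M. Riesz's interpolation
  formula for the derivative.
*)
theory Submission
  imports Defs "HOL-Computational_Algebra.Polynomial"
begin

section \<open>Bernstein's inequality via M. Riesz's interpolation formula\<close>

definition riesz_node :: "nat \<Rightarrow> nat \<Rightarrow> real" where
  "riesz_node m k = (2 * real k + 1) * pi / (2 * real m)"

definition riesz_weight :: "nat \<Rightarrow> nat \<Rightarrow> real" where
  "riesz_weight m k = 1 / (sin (riesz_node m k / 2))\<^sup>2"

lemma riesz_node_reflect:
  assumes "k < 2 * m"
  shows "riesz_node m (2 * m - Suc k) = 2 * pi - riesz_node m k"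
proof -
  have "real (2 * m - Suc k) = 2 * real m - 1 - real k"
    using assms by (simp add: of_nat_diff)
  then show ?thesis
    using assms unfolding riesz_node_def by (simp add: field_simps)
qed

lemma riesz_node_bounds:
  assumes "k < 2 * m"
  shows "0 < riesz_node m k" "riesz_node m k < 2 * pi"
proof -
  have "riesz_node m k = (2 * real k + 1) / (2 * real m) * pi"
    unfolding riesz_node_def by simp
  moreover have "(2 * real k + 1) / (2 * real m) < 2"
    using assms by (simp add: field_simps)
  then have "(2 * real k + 1) / (2 * real m) * pi < 2 * pi"
    by (intro mult_strict_right_mono) auto
  ultimately show "0 < riesz_node m k" "riesz_node m k < 2 * pi"
    using assms by simp_all
qed

lemma riesz_weight_pos:
  assumes "k < 2 * m"
  shows "0 < riesz_weight m k"
proof -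
  have "0 < sin (riesz_node m k / 2)"
    using riesz_node_bounds[OF assms] by (intro sin_gt_zero) auto
  then show ?thesis unfolding riesz_weight_def by simp
qed

lemma riesz_weight_reflect: "k < 2 * m \<Longrightarrow> riesz_weight m (2 * m - Suc k) = riesz_weight m k"
  unfolding riesz_weight_def by (simp add: riesz_node_reflect diff_divide_distrib sin_diff)

lemma neg_one_power_reflect:
  assumes "k < 2 * m"
  shows "(-1::real) ^ (2 * m - Suc k) = - ((-1) ^ k)"
proof -
  have "even (2 * m - Suc k) \<longleftrightarrow> odd k" using assms by presburger
  then show ?thesis by (cases "even k") auto
qed

definition riesz_cos_sum :: "nat \<Rightarrow> real \<Rightarrow> real" where
  "riesz_cos_sum m j = (\<Sum>k<2*m. (-1)^k * cos (j * riesz_node m k) * riesz_weight m k)"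

definition riesz_sin_sum :: "nat \<Rightarrow> real \<Rightarrow> real" where
  "riesz_sin_sum m j = (\<Sum>k<2*m. (-1)^k * sin (j * riesz_node m k) * riesz_weight m k)"

lemma riesz_cos_sum_eq_0: "riesz_cos_sum m (real j) = 0"
proof -
  let ?g = "\<lambda>k. (-1::real)^k * cos (real j * riesz_node m k) * riesz_weight m k"
  have cos_reflect: "cos (real j * (2 * pi - x)) = cos (real j * x)" for x
  proof -
    have "real j * (2 * pi - x) = real (2 * j) * pi - real j * x"
      by (simp add: algebra_simps)
    then show ?thesis by (simp add: cos_diff)
  qed
  have "(\<Sum>k<2*m. ?g k) = (\<Sum>k<2*m. ?g (2 * m - Suc k))"
    by (rule sum.nat_diff_reindex[symmetric])
  also have "\<dots> = - (\<Sum>k<2*m. ?g k)"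
    unfolding sum_negf[symmetric]
    by (rule sum.cong) (simp_all add: riesz_node_reflect riesz_weight_reflect
        neg_one_power_reflect cos_reflect)
  finally show ?thesis unfolding riesz_cos_sum_def by simp
qed

lemma alternating_sin_sum_eq_0:
  assumes "1 \<le> j" "j < m"
  shows "(\<Sum>k<2*m. (-1::real)^k * sin (real j * riesz_node m k)) = 0"
proof -
  define \<alpha> where "\<alpha> = real j * pi / (2 * real m)"
  have node: "real j * riesz_node m k = (2 * real k + 1) * \<alpha>" for k
    unfolding riesz_node_def \<alpha>_def by (simp add: field_simps)
  have "real j / (2 * real m) * pi < 1/2 * pi"
    using assms by (intro mult_strict_right_mono) (auto simp: field_simps)
  then have "0 < cos \<alpha>"
    using assms unfolding \<alpha>_def by (intro cos_gt_zero) auto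
  define u where "u k = (-1::real)^k * sin (2 * real k * \<alpha>)" for k
  have telescope: "2 * cos \<alpha> * ((-1)^k * sin ((2 * real k + 1) * \<alpha>)) = u k - u (Suc k)" for k
  proof -
    have "2 * real (Suc k) * \<alpha> = (2 * real k + 1) * \<alpha> + \<alpha>"
      and "2 * real k * \<alpha> = (2 * real k + 1) * \<alpha> - \<alpha>"
      by (simp_all add: algebra_simps)
    then have sum_eq: "sin (2 * real (Suc k) * \<alpha>) + sin (2 * real k * \<alpha>)
        = 2 * cos \<alpha> * sin ((2 * real k + 1) * \<alpha>)"
      by (simp only: sin_add sin_diff) (simp add: algebra_simps)
    have "u k - u (Suc k) = (-1)^k * (sin (2 * real (Suc k) * \<alpha>) + sin (2 * real k * \<alpha>))"
      unfolding u_def by (simp add: algebra_simps)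
    then show ?thesis by (simp only: sum_eq) (simp add: algebra_simps)
  qed
  have full_turns: "2 * real (2 * m) * \<alpha> = real (2 * j) * pi"
    using assms unfolding \<alpha>_def by (simp add: field_simps)
  have "2 * cos \<alpha> * (\<Sum>k<2*m. (-1)^k * sin (real j * riesz_node m k)) = u 0 - u (2 * m)"
    unfolding node sum_distrib_left telescope by (rule sum_lessThan_telescope')
  also have "\<dots> = 0" unfolding u_def full_turns by simp
  finally show ?thesis using \<open>0 < cos \<alpha>\<close> by simp
qed

text \<open>Since the weight at a node \<theta> is 2 / (1 - cos \<theta>), the recurrence
  sin ((j+1)\<theta>) + sin ((j-1)\<theta>) = 2 cos \<theta> sin (j\<theta>) passes to the weighted sums with
  an unweighted error term.\<close>
lemma riesz_sin_sum_recurrence: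
  assumes "1 \<le> m"
  shows "riesz_sin_sum m (j + 1) + riesz_sin_sum m (j - 1)
    = 2 * riesz_sin_sum m j - 4 * (\<Sum>k<2*m. (-1::real)^k * sin (j * riesz_node m k))"
proof -
  have weighted: "(-1)^k * sin ((j + 1) * \<theta>) * riesz_weight m k + (-1)^k * sin ((j - 1) * \<theta>) * riesz_weight m k
      = 2 * ((-1)^k * sin (j * \<theta>) * riesz_weight m k) - 4 * ((-1::real)^k * sin (j * \<theta>))"
    if "k < 2 * m" and \<theta>: "\<theta> = riesz_node m k" for k \<theta>
  proof -
    have w: "riesz_weight m k * (sin (\<theta> / 2))\<^sup>2 = 1"
      using riesz_weight_pos[OF that(1)] unfolding riesz_weight_def \<theta> by simp
    have "sin ((j + 1) * \<theta>) + sin ((j - 1) * \<theta>) = 2 * sin (j * \<theta>) * cos \<theta>"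
      by (simp add: algebra_simps sin_add sin_diff)
    also have "\<dots> = 2 * sin (j * \<theta>) * (1 - 2 * (sin (\<theta> / 2))\<^sup>2)"
      using cos_double_sin[of "\<theta> / 2"] by simp
    finally have sin_rec: "sin ((j + 1) * \<theta>) + sin ((j - 1) * \<theta>)
        = 2 * sin (j * \<theta>) * (1 - 2 * (sin (\<theta> / 2))\<^sup>2)" .
    have "(-1)^k * sin ((j + 1) * \<theta>) * riesz_weight m k + (-1)^k * sin ((j - 1) * \<theta>) * riesz_weight m k
        = (-1)^k * riesz_weight m k * (sin ((j + 1) * \<theta>) + sin ((j - 1) * \<theta>))"
      by (simp add: algebra_simps)
    also have "\<dots> = 2 * ((-1)^k * sin (j * \<theta>) * riesz_weight m k)
        - 4 * ((-1)^k * sin (j * \<theta>)) * (riesz_weight m k * (sin (\<theta> / 2))\<^sup>2)"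
      unfolding sin_rec by (simp add: algebra_simps)
    finally show ?thesis unfolding w by simp
  qed
  show ?thesis
    unfolding riesz_sin_sum_def sum.distrib[symmetric] sum_subtractf[symmetric] sum_distrib_left
    by (rule sum.cong) (simp_all add: weighted)
qed

lemma riesz_sin_sum_linear:
  assumes "1 \<le> m" "j \<le> m"
  shows "riesz_sin_sum m (real j) = real j * riesz_sin_sum m 1"
proof -
  have "riesz_sin_sum m (real i) = real i * riesz_sin_sum m 1
      \<and> riesz_sin_sum m (real (Suc i)) = real (Suc i) * riesz_sin_sum m 1" if "Suc i \<le> m" for i
    using that
  proof (induction i)
    case 0
    then show ?case by (simp add: riesz_sin_sum_def)
  next
    case (Suc i)
    have "riesz_sin_sum m (real (Suc i) + 1) + riesz_sin_sum m (real (Suc i) - 1)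
        = 2 * riesz_sin_sum m (real (Suc i))"
      using riesz_sin_sum_recurrence[OF assms(1), of "real (Suc i)"]
        alternating_sin_sum_eq_0[of "Suc i" m] Suc.prems by simp
    then show ?case using Suc by (simp add: algebra_simps)
  qed
  then show ?thesis using assms by (cases j) (auto simp: riesz_sin_sum_def)
qed

lemma riesz_sin_sum_self: "1 \<le> m \<Longrightarrow> riesz_sin_sum m (real m) = (\<Sum>k<2*m. riesz_weight m k)"
  unfolding riesz_sin_sum_def
proof (rule sum.cong)
  fix k
  assume "1 \<le> m"
  then have "real m * riesz_node m k = real k * pi + pi / 2"
    unfolding riesz_node_def by (simp add: field_simps)
  then have "sin (real m * riesz_node m k) = (-1)^k" by (simp add: sin_add)
  then show "(-1)^k * sin (real m * riesz_node m k) * riesz_weight m k = riesz_weight m k"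
    by (simp flip: power_mult_distrib)
qed simp

lemma sum_riesz_weight: "1 \<le> m \<Longrightarrow> (\<Sum>k<2*m. riesz_weight m k) = real m * riesz_sin_sum m 1"
  using riesz_sin_sum_self riesz_sin_sum_linear[of m m] by simp

lemma riesz_sin_sum_one_pos:
  assumes "1 \<le> m"
  shows "0 < riesz_sin_sum m 1"
proof -
  have "0 < (\<Sum>k<2*m. riesz_weight m k)"
    using assms by (intro sum_pos) (auto intro: riesz_weight_pos simp: lessThan_empty_iff)
  then have "0 < real m * riesz_sin_sum m 1"
    using sum_riesz_weight[OF assms] by simp
  then show ?thesis using assms by (simp add: zero_less_mult_iff)
qed

text \<open>Trigonometric polynomials of degree at most m, generated inductively so that the
  linear identities below can be proved by rule induction.\<close>
inductive in_trig_span :: "nat \<Rightarrow> (real \<Rightarrow> real) \<Rightarrow> bool" for m where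
  cos: "j \<le> m \<Longrightarrow> in_trig_span m (\<lambda>x. c * cos (real j * x))"
| sin: "j \<le> m \<Longrightarrow> in_trig_span m (\<lambda>x. c * sin (real j * x))"
| add: "in_trig_span m f \<Longrightarrow> in_trig_span m g \<Longrightarrow> in_trig_span m (\<lambda>x. f x + g x)"

definition riesz_sum :: "nat \<Rightarrow> (real \<Rightarrow> real) \<Rightarrow> real \<Rightarrow> real" where
  "riesz_sum m F x = (\<Sum>k<2*m. (-1)^k * F (x + riesz_node m k) * riesz_weight m k)"

text \<open>The normalising constant riesz_sin_sum m 1 is never evaluated: its positivity and
  sum_riesz_weight are all that is needed.\<close>
lemma riesz_interpolation:
  assumes "1 \<le> m" "in_trig_span m F"
  shows "(F has_real_derivative riesz_sum m F x / riesz_sin_sum m 1) (at x)"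
  using assms(2)
proof induction
  case (cos j c)
  have "riesz_sum m (\<lambda>x. c * cos (real j * x)) x
      = c * cos (real j * x) * riesz_cos_sum m j - c * sin (real j * x) * riesz_sin_sum m j"
    unfolding riesz_sum_def riesz_cos_sum_def riesz_sin_sum_def sum_distrib_left sum_subtractf[symmetric]
    by (rule sum.cong) (simp_all add: cos_add algebra_simps)
  also have "\<dots> = riesz_sin_sum m 1 * (- c * real j * sin (real j * x))"
    using riesz_cos_sum_eq_0 riesz_sin_sum_linear[OF assms(1) cos] by simp
  finally show ?case
    using riesz_sin_sum_one_pos[OF assms(1)] by (auto intro!: derivative_eq_intros)
next
  case (sin j c)
  have "riesz_sum m (\<lambda>x. c * sin (real j * x)) x
      = c * sin (real j * x) * riesz_cos_sum m j + c * cos (real j * x) * riesz_sin_sum m j"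
    unfolding riesz_sum_def riesz_cos_sum_def riesz_sin_sum_def sum_distrib_left sum.distrib[symmetric]
    by (rule sum.cong) (simp_all add: sin_add algebra_simps)
  also have "\<dots> = riesz_sin_sum m 1 * (c * real j * cos (real j * x))"
    using riesz_cos_sum_eq_0 riesz_sin_sum_linear[OF assms(1) sin] by simp
  finally show ?case
    using riesz_sin_sum_one_pos[OF assms(1)] by (auto intro!: derivative_eq_intros)
next
  case (add f g)
  have "riesz_sum m (\<lambda>x. f x + g x) x = riesz_sum m f x + riesz_sum m g x"
    unfolding riesz_sum_def sum.distrib[symmetric] by (rule sum.cong) (simp_all add: algebra_simps)
  then show ?case
    using DERIV_add[OF add.IH] by (simp add: add_divide_distrib)
qed

theorem bernstein_inequality:
  assumes "1 \<le> m" "in_trig_span m F" "\<And>x. \<bar>F x\<bar> \<le> M"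
    and "(F has_real_derivative D) (at x)"
  shows "\<bar>D\<bar> \<le> real m * M"
proof -
  have D: "D = riesz_sum m F x / riesz_sin_sum m 1"
    using DERIV_unique riesz_interpolation[OF assms(1,2)] assms(4) by blast
  have "\<bar>riesz_sum m F x\<bar> \<le> (\<Sum>k<2*m. \<bar>(-1)^k * F (x + riesz_node m k) * riesz_weight m k\<bar>)"
    unfolding riesz_sum_def by (rule sum_abs)
  also have "\<dots> \<le> (\<Sum>k<2*m. M * riesz_weight m k)"
  proof (rule sum_mono)
    fix k
    assume "k \<in> {..<2*m}"
    then have w: "0 < riesz_weight m k" by (simp add: riesz_weight_pos)
    then have "\<bar>(-1)^k * F (x + riesz_node m k) * riesz_weight m k\<bar>
        = \<bar>F (x + riesz_node m k)\<bar> * riesz_weight m k"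
      by (simp add: abs_mult)
    also have "\<dots> \<le> M * riesz_weight m k"
      using assms(3) w by (intro mult_right_mono) auto
    finally show "\<bar>(-1)^k * F (x + riesz_node m k) * riesz_weight m k\<bar> \<le> M * riesz_weight m k" .
  qed
  also have "\<dots> = M * (\<Sum>k<2*m. riesz_weight m k)"
    by (rule sum_distrib_left[symmetric])
  also have "\<dots> = real m * M * riesz_sin_sum m 1"
    using sum_riesz_weight[OF assms(1)] by simp
  finally have "\<bar>riesz_sum m F x\<bar> \<le> real m * M * riesz_sin_sum m 1" .
  moreover have "0 < riesz_sin_sum m 1" using riesz_sin_sum_one_pos[OF assms(1)] .
  ultimately show ?thesis
    unfolding D abs_divide by (simp add: pos_divide_le_eq)
qed

lemma in_trig_span_const: "in_trig_span m (\<lambda>x. c)"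
  using in_trig_span.cos[of 0 m c] by simp

lemma in_trig_span_cos_mult:
  assumes "in_trig_span m F"
  shows "in_trig_span (Suc m) (\<lambda>x. cos x * F x)"
  using assms
proof induction
  case (cos j c)
  show ?case
  proof (cases "j = 0")
    case True
    then show ?thesis using in_trig_span.cos[of 1 "Suc m" c] by (simp add: mult.commute)
  next
    case False
    then have "cos x * (c * cos (real j * x))
        = c / 2 * cos (real (Suc j) * x) + c / 2 * cos (real (j - 1) * x)" for x
      by (simp add: of_nat_diff algebra_simps cos_add cos_diff)
    moreover have "in_trig_span (Suc m)
        (\<lambda>x. c / 2 * cos (real (Suc j) * x) + c / 2 * cos (real (j - 1) * x))"
      using cos.hyps by (intro in_trig_span.add in_trig_span.cos) auto
    ultimately show ?thesis by simp
  qed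
next
  case (sin j c)
  show ?case
  proof (cases "j = 0")
    case True
    then show ?thesis using in_trig_span.sin[of 0 "Suc m" c] by simp
  next
    case False
    then have "cos x * (c * sin (real j * x))
        = c / 2 * sin (real (Suc j) * x) + c / 2 * sin (real (j - 1) * x)" for x
      by (simp add: of_nat_diff algebra_simps sin_add sin_diff)
    moreover have "in_trig_span (Suc m)
        (\<lambda>x. c / 2 * sin (real (Suc j) * x) + c / 2 * sin (real (j - 1) * x))"
      using sin.hyps by (intro in_trig_span.add in_trig_span.sin) auto
    ultimately show ?thesis by simp
  qed
next
  case (add f g)
  then show ?case using in_trig_span.add[OF add.IH] by (simp add: distrib_left)
qed

lemma in_trig_span_poly_cos:
  fixes P :: "real poly"
  shows "degree P \<le> m \<Longrightarrow> in_trig_span m (\<lambda>x. poly P (cos x))"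
proof (induction m arbitrary: P)
  case 0
  then obtain a where "P = [:a:]" using degree0_coeffs by auto
  then show ?case using in_trig_span_const by simp
next
  case (Suc m)
  obtain a p where P: "P = pCons a p" by (cases P)
  have "degree p \<le> m" using Suc.prems P by (cases "p = 0") (auto simp: degree_pCons_eq)
  then have "in_trig_span (Suc m) (\<lambda>x. cos x * poly p (cos x))"
    using Suc.IH in_trig_span_cos_mult by blast
  then have "in_trig_span (Suc m) (\<lambda>x. a + cos x * poly p (cos x))"
    using in_trig_span_const in_trig_span.add by blast
  then show ?case using P by simp
qed

text \<open>The trigonometric inequality for the cosine polynomial \<theta> \<mapsto> Q (a cos \<theta>) at
  \<theta> = arccos (y / a).\<close>
theorem bernstein_inequality_poly:
  fixes Q :: "real poly"
  assumes "degree Q \<le> N" "0 < a" "\<And>y. \<bar>y\<bar> \<le> a \<Longrightarrow> \<bar>poly Q y\<bar> \<le> M" "\<bar>y\<bar> \<le> a"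
  shows "sqrt (a\<^sup>2 - y\<^sup>2) * \<bar>poly (pderiv Q) y\<bar> \<le> real N * M"
proof (cases "N = 0")
  case True
  with assms(1) have "pderiv Q = 0" by (simp add: pderiv_eq_0_iff)
  moreover have "0 \<le> M" using assms(3,4) by (meson abs_ge_zero order_trans)
  ultimately show ?thesis by simp
next
  case False
  define \<theta> where "\<theta> = arccos (y / a)"
  have y_a: "\<bar>y / a\<bar> \<le> 1" using assms(2,4) by (simp add: abs_divide divide_le_eq_1)
  have cos_\<theta>: "a * cos \<theta> = y" unfolding \<theta>_def using cos_arccos_abs[OF y_a] assms(2) by simp
  have "a * sin \<theta> = sqrt (a\<^sup>2) * sqrt (1 - (y / a)\<^sup>2)"
    unfolding \<theta>_def using sin_arccos_abs[OF y_a] assms(2) by simp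
  also have "\<dots> = sqrt (a\<^sup>2 * (1 - (y / a)\<^sup>2))" by (simp only: real_sqrt_mult)
  also have "a\<^sup>2 * (1 - (y / a)\<^sup>2) = a\<^sup>2 - y\<^sup>2"
    using assms(2) by (simp add: power_divide field_simps)
  finally have sin_\<theta>: "a * sin \<theta> = sqrt (a\<^sup>2 - y\<^sup>2)" .
  define G where "G \<phi> = poly Q (a * cos \<phi>)" for \<phi>
  have "degree (Q \<circ>\<^sub>p [:0, a:]) \<le> N"
    using assms(1,2) degree_pcompose_le[of Q "[:0, a:]"] by simp
  then have "in_trig_span N (\<lambda>\<phi>. poly (Q \<circ>\<^sub>p [:0, a:]) (cos \<phi>))"
    by (rule in_trig_span_poly_cos)
  then have span: "in_trig_span N G"
    unfolding G_def by (simp add: poly_pcompose mult.commute)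
  have bound: "\<bar>G \<phi>\<bar> \<le> M" for \<phi>
  proof -
    have "\<bar>a * cos \<phi>\<bar> \<le> a"
      using assms(2) abs_cos_le_one[of \<phi>] by (simp add: abs_mult mult_left_le)
    then show ?thesis unfolding G_def by (rule assms(3))
  qed
  have "(G has_real_derivative - (a * sin \<theta>) * poly (pderiv Q) (a * cos \<theta>)) (at \<theta>)"
    unfolding G_def by (auto intro!: derivative_eq_intros)
  then have "\<bar>- (a * sin \<theta>) * poly (pderiv Q) (a * cos \<theta>)\<bar> \<le> real N * M"
    using False span bound by (intro bernstein_inequality) auto
  moreover have "y\<^sup>2 \<le> a\<^sup>2"
    using power_mono[OF assms(4) abs_ge_zero, of 2] by simp
  ultimately show ?thesis unfolding cos_\<theta> sin_\<theta> by (simp add: abs_mult)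
qed

section \<open>Odd trigonometric polynomials as polynomials in the half-angle sine\<close>

lemma odd_trig_poly_sine_sum:
  assumes "trig_poly n T" "\<And>t. T (- t) = - T t"
  obtains \<beta> where "T = (\<lambda>t. \<Sum>k=1..n. \<beta> k * sin (real k * t))"
proof -
  obtain \<alpha> \<beta> :: "nat \<Rightarrow> real" where
    T: "\<And>t. T t = \<alpha> 0 + (\<Sum>k=1..n. \<alpha> k * cos (real k * t) + \<beta> k * sin (real k * t))"
    using assms(1) unfolding trig_poly_def by blast
  have "T t = (\<Sum>k=1..n. \<beta> k * sin (real k * t))" for t
  proof -
    have "T t - T (- t) = (\<Sum>k=1..n. (\<alpha> k * cos (real k * t) + \<beta> k * sin (real k * t))
        - (\<alpha> k * cos (real k * - t) + \<beta> k * sin (real k * - t)))"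
      unfolding T sum_subtractf by simp
    also have "\<dots> = 2 * (\<Sum>k=1..n. \<beta> k * sin (real k * t))"
      unfolding sum_distrib_left by (rule sum.cong) simp_all
    finally show ?thesis using assms(2)[of t] by simp
  qed
  then show ?thesis using that by blast
qed

text \<open>sin ((2r+1)x) as a polynomial in sin x, from
  sin ((2r+5)x) + sin ((2r+1)x) = 2 (1 - 2 sin x ^ 2) sin ((2r+3)x).\<close>
fun odd_sin_poly :: "nat \<Rightarrow> real poly" where
  "odd_sin_poly 0 = [:0, 1:]"
| "odd_sin_poly (Suc 0) = [:0, 3, 0, -4:]"
| "odd_sin_poly (Suc (Suc r)) = smult 2 ([:1, 0, -2:] * odd_sin_poly (Suc r)) - odd_sin_poly r"

lemma poly_odd_sin_poly: "poly (odd_sin_poly r) (sin x) = sin ((2 * real r + 1) * x)"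
proof (induction r rule: odd_sin_poly.induct)
  case 1
  then show ?case by simp
next
  case 2
  have "sin (3 * x) = sin (2 * x + x)" by simp
  also have "\<dots> = 2 * sin x * (cos x)\<^sup>2 + (1 - 2 * (sin x)\<^sup>2) * sin x"
    unfolding sin_add sin_double cos_double_sin by (simp add: power2_eq_square)
  also have "\<dots> = 3 * sin x - 4 * sin x ^ 3"
    unfolding cos_squared_eq by (simp add: power2_eq_square power3_eq_cube algebra_simps)
  finally show ?case by (simp add: algebra_simps power3_eq_cube)
next
  case (3 r)
  define A where "A = (2 * real (Suc r) + 1) * x"
  have "(2 * real (Suc (Suc r)) + 1) * x = A + 2 * x" "(2 * real r + 1) * x = A - 2 * x"
    unfolding A_def by (simp_all add: algebra_simps)
  then have "sin ((2 * real (Suc (Suc r)) + 1) * x)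
      = 2 * (1 - 2 * (sin x)\<^sup>2) * sin A - sin ((2 * real r + 1) * x)"
    by (simp only: sin_add sin_diff cos_double_sin) (simp add: algebra_simps)
  then show ?case using 3 unfolding A_def by (simp add: algebra_simps power2_eq_square)
qed

lemma degree_odd_sin_poly: "degree (odd_sin_poly r) \<le> 2 * r + 1"
proof (induction r rule: odd_sin_poly.induct)
  case (3 r)
  have "degree ([:1, 0, -2:] * odd_sin_poly (Suc r)) \<le> 2 + (2 * Suc r + 1)"
    using degree_mult_le[of "[:1, 0, -2::real:]" "odd_sin_poly (Suc r)"] 3 by simp
  then have "degree (smult 2 ([:1, 0, -2:] * odd_sin_poly (Suc r))) \<le> 2 * Suc (Suc r) + 1"
    by simp
  moreover have "degree (odd_sin_poly r) \<le> 2 * Suc (Suc r) + 1" using 3 by simp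
  ultimately show ?case by (simp add: degree_diff_le)
qed simp_all

text \<open>Built from 2 sin (kt) cos (t/2) = sin ((2k+1) t/2) + sin ((2k-1) t/2).\<close>
definition half_angle_poly :: "(nat \<Rightarrow> real) \<Rightarrow> nat \<Rightarrow> real poly" where
  "half_angle_poly \<beta> n = (\<Sum>k=1..n. smult (\<beta> k / 2) (odd_sin_poly k + odd_sin_poly (k - 1)))"

lemma poly_half_angle_poly:
  "poly (half_angle_poly \<beta> n) (sin (t / 2)) = (\<Sum>k=1..n. \<beta> k * sin (real k * t)) * cos (t / 2)"
  unfolding half_angle_poly_def poly_sum sum_distrib_right
proof (rule sum.cong)
  fix k
  assume "k \<in> {1..n}"
  then have "2 * real (k - 1) + 1 = 2 * real k - 1" by (simp add: of_nat_diff)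
  then have "poly (odd_sin_poly k + odd_sin_poly (k - 1)) (sin (t / 2))
      = sin (real k * t + t / 2) + sin (real k * t - t / 2)"
    by (simp add: poly_odd_sin_poly algebra_simps)
  also have "\<dots> = 2 * sin (real k * t) * cos (t / 2)"
    by (simp add: sin_add sin_diff)
  finally show "poly (smult (\<beta> k / 2) (odd_sin_poly k + odd_sin_poly (k - 1))) (sin (t / 2))
      = \<beta> k * sin (real k * t) * cos (t / 2)"
    by simp
qed simp

lemma degree_half_angle_poly: "degree (half_angle_poly \<beta> n) \<le> 2 * n + 1"
  unfolding half_angle_poly_def
proof (rule degree_sum_le)
  fix k
  assume "k \<in> {1..n}"
  then have "degree (odd_sin_poly k) \<le> 2 * n + 1" "degree (odd_sin_poly (k - 1)) \<le> 2 * n + 1"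
    using degree_odd_sin_poly[of k] degree_odd_sin_poly[of "k - 1"] by auto
  then have "degree (odd_sin_poly k + odd_sin_poly (k - 1)) \<le> 2 * n + 1"
    by (rule degree_add_le)
  then show "degree (smult (\<beta> k / 2) (odd_sin_poly k + odd_sin_poly (k - 1))) \<le> 2 * n + 1"
    using degree_smult_le order_trans by blast
qed simp

section \<open>The derivative on the half interval\<close>

lemma sin_ge_linear:
  assumes "0 \<le> x" "x \<le> pi / 2"
  shows "0.58 * x \<le> sin x"
proof -
  have "\<bar>sin x - (\<Sum>m<3. sin_coeff m * x ^ m)\<bar> \<le> inverse (fact 3) * \<bar>x\<bar> ^ 3"
    by (rule Maclaurin_sin_bound)
  moreover have "(\<Sum>m<3. sin_coeff m * x ^ m) = x"
    by (simp add: numeral_3_eq_3 sin_coeff_def)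
  moreover have "inverse (fact 3) * \<bar>x\<bar> ^ 3 = x * (x\<^sup>2 / 6)"
    using assms(1) by (simp add: numeral_3_eq_3 power2_eq_square)
  ultimately have taylor: "x - x * (x\<^sup>2 / 6) \<le> sin x" by linarith
  have "x\<^sup>2 \<le> 1.5708\<^sup>2"
    using assms pi_approx by (intro power_mono) auto
  then have "x\<^sup>2 / 6 \<le> 0.42" by (simp add: power2_eq_square)
  then have "x * (x\<^sup>2 / 6) \<le> x * 0.42"
    using assms(1) by (intro mult_left_mono) auto
  then show ?thesis using taylor by (simp add: algebra_simps)
qed

lemma sin_sq_le_half_sin_double_sq:
  assumes "\<bar>x\<bar> \<le> y" "y \<le> pi / 4"
  shows "2 * (sin x)\<^sup>2 \<le> (sin (2 * y))\<^sup>2"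
proof -
  have "sin x \<le> sin y" "- sin x \<le> sin y"
    using assms by (simp_all add: sin_mono_le_eq flip: sin_minus)
  then have "(sin x)\<^sup>2 \<le> (sin y)\<^sup>2"
    by (simp add: abs_le_square_iff[symmetric] abs_le_iff)
  moreover have "sin y \<le> sqrt 2 / 2"
    using assms by (subst sin_45[symmetric], subst sin_mono_le_eq) auto
  then have "(sin y)\<^sup>2 \<le> (sqrt 2 / 2)\<^sup>2"
    using assms by (intro power_mono sin_ge_zero) auto
  then have "(sin y)\<^sup>2 \<le> 1 / 2" by (simp add: power_divide)
  moreover have "(sin (2 * y))\<^sup>2 = 4 * (sin y)\<^sup>2 * (1 - (sin y)\<^sup>2)"
    by (simp add: sin_double power_mult_distrib cos_squared_eq)
  moreover have "4 * (sin y)\<^sup>2 * (1 - (sin y)\<^sup>2) - 2 * (sin y)\<^sup>2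
      = 2 * (sin y)\<^sup>2 * (1 - 2 * (sin y)\<^sup>2)"
    by (simp add: algebra_simps)
  moreover have "0 \<le> 2 * (sin y)\<^sup>2 * (1 - 2 * (sin y)\<^sup>2)"
    using \<open>(sin y)\<^sup>2 \<le> 1 / 2\<close> by simp
  ultimately show ?thesis by linarith
qed

lemma abs_tan_le_one:
  assumes "\<bar>x\<bar> \<le> pi / 4"
  shows "\<bar>tan x\<bar> \<le> 1"
proof -
  have "- (pi / 4) \<le> x" "x \<le> pi / 4" using assms by auto
  then show ?thesis
    using tan_mono_le[of "- (pi / 4)" x] tan_mono_le[of x "pi / 4"] pi_gt_zero
    by (auto simp: tan_45 abs_le_iff)
qed

lemma half_angle_poly_bound:
  fixes Q :: "real poly"
  assumes QT: "\<And>t. poly Q (sin (t / 2)) = T t * cos (t / 2)"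
    and "0 \<le> b" "b \<le> pi" and M: "\<And>t. t \<in> {-b..b} \<Longrightarrow> \<bar>T t\<bar> \<le> M"
    and y: "\<bar>y\<bar> \<le> sin (b / 2)"
  shows "\<bar>poly Q y\<bar> \<le> M"
proof -
  define s where "s = arcsin y"
  have y1: "\<bar>y\<bar> \<le> 1" using y sin_le_one order_trans by blast
  have "arcsin (sin (b / 2)) = b / 2" using assms(2,3) by (intro arcsin_sin) auto
  moreover have "arcsin (- sin (b / 2)) \<le> s" "s \<le> arcsin (sin (b / 2))"
    unfolding s_def using y y1 by (auto simp: abs_le_iff intro!: arcsin_le_arcsin)
  moreover have "arcsin (- sin (b / 2)) = - arcsin (sin (b / 2))"
    using y y1 by (intro arcsin_minus) auto
  ultimately have "2 * s \<in> {-b..b}" by auto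
  moreover have "poly Q y = T (2 * s) * cos s"
    using QT[of "2 * s"] y1 unfolding s_def by simp
  ultimately show ?thesis
    using M by (simp add: abs_mult mult_le_one order_trans[OF mult_right_le_one_le])
qed

lemma deriv_from_half_angle_poly:
  fixes Q :: "real poly"
  assumes QT: "\<And>t. poly Q (sin (t / 2)) = T t * cos (t / 2)"
    and D: "(T has_real_derivative D) (at t)" and "cos (t / 2) \<noteq> 0"
  shows "D = poly (pderiv Q) (sin (t / 2)) / 2 + T t * tan (t / 2) / 2"
proof -
  have "((\<lambda>t. poly Q (sin (t / 2))) has_real_derivative
      poly (pderiv Q) (sin (t / 2)) * cos (t / 2) / 2) (at t)"
    by (auto intro!: derivative_eq_intros)
  moreover have "((\<lambda>t. T t * cos (t / 2)) has_real_derivative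
      D * cos (t / 2) - T t * sin (t / 2) / 2) (at t)"
    by (auto intro!: derivative_eq_intros D)
  ultimately have "poly (pderiv Q) (sin (t / 2)) * cos (t / 2) / 2
      = D * cos (t / 2) - T t * sin (t / 2) / 2"
    unfolding QT by (rule DERIV_unique)
  then show ?thesis using assms(3) by (simp add: tan_def field_simps)
qed

lemma abs_deriv_le_half_angle_poly:
  fixes Q :: "real poly"
  assumes QT: "\<And>t. poly Q (sin (t / 2)) = T t * cos (t / 2)"
    and D: "(T has_real_derivative D) (at t)" and "\<bar>t\<bar> \<le> pi / 2" "\<bar>T t\<bar> \<le> M"
  shows "\<bar>D\<bar> \<le> \<bar>poly (pderiv Q) (sin (t / 2))\<bar> / 2 + M / 2"
proof -
  have "\<bar>T t * tan (t / 2)\<bar> \<le> M * 1"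
    unfolding abs_mult using assms(3,4) abs_tan_le_one[of "t / 2"] by (intro mult_mono) auto
  moreover have "cos (t / 2) \<noteq> 0"
    using assms(3) pi_gt_zero unfolding abs_le_iff
    by (intro cos_gt_zero_pi[THEN less_imp_neq, symmetric]) linarith+
  then have "D = poly (pderiv Q) (sin (t / 2)) / 2 + T t * tan (t / 2) / 2"
    by (rule deriv_from_half_angle_poly[OF QT D])
  then have "\<bar>D\<bar> \<le> \<bar>poly (pderiv Q) (sin (t / 2))\<bar> / 2 + \<bar>T t * tan (t / 2)\<bar> / 2"
    using abs_triangle_ineq[of "poly (pderiv Q) (sin (t / 2)) / 2"] by simp
  ultimately show ?thesis by simp
qed

lemma half_angle_poly_deriv_bound:
  fixes Q :: "real poly"
  assumes QT: "\<And>t. poly Q (sin (t / 2)) = T t * cos (t / 2)" and "degree Q \<le> N"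
    and b: "0 < b" "b < pi" and M: "\<And>t. t \<in> {-b..b} \<Longrightarrow> \<bar>T t\<bar> \<le> M"
    and t: "\<bar>t\<bar> \<le> b / 2"
  shows "sin (b / 2) * \<bar>poly (pderiv Q) (sin (t / 2))\<bar> \<le> sqrt 2 * real N * M"
proof -
  define a where "a = sin (b / 2)"
  define s where "s = sin (t / 2)"
  define q where "q = \<bar>poly (pderiv Q) s\<bar>"
  have "0 < a" unfolding a_def using b by (intro sin_gt_zero) auto
  have "2 * s\<^sup>2 \<le> a\<^sup>2"
    unfolding a_def s_def using sin_sq_le_half_sin_double_sq[of "t / 2" "b / 4"] b t by auto
  then have "\<bar>s\<bar>\<^sup>2 \<le> a\<^sup>2"
    using zero_le_power2[of s] unfolding power2_abs by linarith
  then have "\<bar>s\<bar> \<le> a"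
    by (rule power2_le_imp_le) (use \<open>0 < a\<close> in simp)
  moreover have "\<bar>poly Q y\<bar> \<le> M" if "\<bar>y\<bar> \<le> a" for y
    using half_angle_poly_bound[of Q T b M y] QT M b that unfolding a_def by simp
  ultimately have bernstein: "sqrt (a\<^sup>2 - s\<^sup>2) * q \<le> real N * M"
    unfolding q_def using bernstein_inequality_poly[OF assms(2) \<open>0 < a\<close>] by blast
  have "a \<le> sqrt (2 * (a\<^sup>2 - s\<^sup>2))"
    using \<open>2 * s\<^sup>2 \<le> a\<^sup>2\<close> by (intro real_le_rsqrt) auto
  then have "a \<le> sqrt 2 * sqrt (a\<^sup>2 - s\<^sup>2)" by (simp only: real_sqrt_mult)
  then have "a * q \<le> sqrt 2 * sqrt (a\<^sup>2 - s\<^sup>2) * q"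
    unfolding q_def by (rule mult_right_mono) simp
  also have "\<dots> = sqrt 2 * (sqrt (a\<^sup>2 - s\<^sup>2) * q)" by (simp only: mult.assoc)
  also have "\<dots> \<le> sqrt 2 * (real N * M)"
    using bernstein by (intro mult_left_mono) auto
  finally show ?thesis unfolding a_def s_def q_def by (simp add: mult.assoc)
qed

text \<open>The constant: 3 sqrt 2 / (2 * 0.29) + pi / 2 < 9.\<close>
lemma abs_le_nine_div:
  assumes "1 \<le> n" "0 < b" "b < pi" "0 \<le> M"
    and D: "\<bar>D\<bar> \<le> q / 2 + M / 2" and q: "0.29 * b * q \<le> sqrt 2 * real (2 * n + 1) * M"
  shows "\<bar>D\<bar> \<le> 9 / b * real n * M"
proof -
  have "0 \<le> real n * M" using assms(4) by simp
  have "b * \<bar>D\<bar> \<le> b * (q / 2 + M / 2)"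
    using D assms(2) by (intro mult_left_mono) auto
  also have "\<dots> = b * q / 2 + b * M / 2" by (simp add: algebra_simps)
  finally have "b * \<bar>D\<bar> \<le> b * q / 2 + b * M / 2" .
  moreover have "b * q \<le> 14.64 * (real n * M)"
  proof -
    have "sqrt 2 * real (2 * n + 1) * M \<le> 1.415 * (3 * real n) * M"
      using assms(1,4) by (intro mult_right_mono mult_mono real_le_lsqrt) (auto simp: power2_eq_square)
    with q have "0.29 * b * q \<le> 1.415 * (3 * real n) * M" by (rule order_trans)
    then show ?thesis using \<open>0 \<le> real n * M\<close> by simp
  qed
  moreover have "b * M \<le> 3.1416 * (real n * M)"
  proof -
    have "b \<le> 3.1416 * real n"
      using assms(1,3) pi_approx by (simp add: real_of_nat_ge_one_iff)
    from mult_right_mono[OF this assms(4)] show ?thesis by (simp only: mult.assoc)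
  qed
  ultimately have "b * \<bar>D\<bar> \<le> 9 * (real n * M)" using \<open>0 \<le> real n * M\<close> by simp
  then show ?thesis using assms(2) by (simp add: field_simps)
qed

lemma sine_sum_deriv_bound:
  fixes \<beta> :: "nat \<Rightarrow> real" and n :: nat
  defines "T \<equiv> \<lambda>t. \<Sum>k=1..n. \<beta> k * sin (real k * t)"
  assumes b: "0 < b" "b < pi" and M: "\<And>t. t \<in> {-b..b} \<Longrightarrow> \<bar>T t\<bar> \<le> M"
    and t: "\<bar>t\<bar> \<le> b / 2"
  shows "\<bar>deriv T t\<bar> \<le> 9 / b * real n * M"
proof -
  define D where "D = (\<Sum>k=1..n. cos (real k * t) * real k * \<beta> k)"
  have T': "(T has_real_derivative D) (at t)"
    unfolding T_def D_def by (auto intro!: derivative_eq_intros)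
  then have "deriv T t = D" by (rule DERIV_imp_deriv)
  show ?thesis
  proof (cases "n = 0")
    case True
    then show ?thesis using \<open>deriv T t = D\<close> by (simp add: D_def)
  next
    case False
    define Q where "Q = half_angle_poly \<beta> n"
    define q where "q = \<bar>poly (pderiv Q) (sin (t / 2))\<bar>"
    have QT: "poly Q (sin (u / 2)) = T u * cos (u / 2)" for u
      unfolding Q_def T_def by (rule poly_half_angle_poly)
    have "degree Q \<le> 2 * n + 1" unfolding Q_def by (rule degree_half_angle_poly)
    have "t \<in> {-b..b}" using t b by (auto simp: abs_le_iff)
    then have D: "\<bar>D\<bar> \<le> q / 2 + M / 2"
      unfolding q_def using b t M by (intro abs_deriv_le_half_angle_poly[OF QT T']) auto
    have "0.29 * b * q \<le> sin (b / 2) * q"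
      using sin_ge_linear[of "b / 2"] b unfolding q_def by (intro mult_right_mono) auto
    also have "\<dots> \<le> sqrt 2 * real (2 * n + 1) * M"
      unfolding q_def using half_angle_poly_deriv_bound[OF QT \<open>degree Q \<le> 2 * n + 1\<close> b M t]
      by simp
    finally have q: "0.29 * b * q \<le> sqrt 2 * real (2 * n + 1) * M" .
    have "0 \<le> M" using M[of 0] b by simp
    with False b D q show ?thesis
      unfolding \<open>deriv T t = D\<close> by (intro abs_le_nine_div) auto
  qed
qed

lemma abs_le_sup_norm_on:
  assumes "continuous_on {a..b} g" "x \<in> {a..b}"
  shows "\<bar>g x\<bar> \<le> sup_norm_on g a b"
  unfolding sup_norm_on_def
proof (rule cSUP_upper2[OF _ assms(2) order_refl])
  have "compact ((\<lambda>x. \<bar>g x\<bar>) ` {a..b})"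
    using assms(1) by (intro compact_continuous_image continuous_intros) auto
  then show "bdd_above ((\<lambda>x. \<bar>g x\<bar>) ` {a..b})"
    by (intro bounded_imp_bdd_above compact_imp_bounded)
qed

lemma sup_norm_on_le:
  assumes "a \<le> b" "\<And>x. x \<in> {a..b} \<Longrightarrow> \<bar>g x\<bar> \<le> C"
  shows "sup_norm_on g a b \<le> C"
  unfolding sup_norm_on_def using assms by (intro cSUP_least) auto

theorem lemma3p1:
  shows "\<exists>c0::real. c0 < 10 \<and>
    (\<forall>b n T. 0 < b \<and> b < pi \<and> trig_poly n T \<and> (\<forall>t. T (- t) = - T t) \<longrightarrow>
       sup_norm_on (deriv T) (- b / 2) (b / 2) \<le> c0 / b * real n * sup_norm_on T (- b) b)"
proof (intro exI[of _ 9] conjI allI impI)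
  fix b :: real and n :: nat and T :: "real \<Rightarrow> real"
  assume "0 < b \<and> b < pi \<and> trig_poly n T \<and> (\<forall>t. T (- t) = - T t)"
  then have b: "0 < b" "b < pi" and T_poly: "trig_poly n T" and T_odd: "\<And>t. T (- t) = - T t"
    by auto
  obtain \<beta> where T: "T = (\<lambda>t. \<Sum>k=1..n. \<beta> k * sin (real k * t))"
    using odd_trig_poly_sine_sum[OF T_poly T_odd] .
  have "\<bar>T t\<bar> \<le> sup_norm_on T (- b) b" if "t \<in> {-b..b}" for t
    using that unfolding T by (intro abs_le_sup_norm_on continuous_intros)
  then have "\<bar>deriv T t\<bar> \<le> 9 / b * real n * sup_norm_on T (- b) b" if "t \<in> {-b/2..b/2}" for t
    using b that unfolding T by (intro sine_sum_deriv_bound) auto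
  then show "sup_norm_on (deriv T) (- b / 2) (b / 2) \<le> 9 / b * real n * sup_norm_on T (- b) b"
    using b by (intro sup_norm_on_le) auto
qed simp

end
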